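(* Let $\ell\in\{\ell_{lin},\ell_{log}\}$ and suppose the matrix $[X\ Z]\in\mathbb{R}^{n\times(p_1+p_2)}$ is $s$-regular, where $s=s_1+s_2$. Then (SCL) has a global minimizer, (SCL) has only finitely many local minimizers, and each local minimizer $\beta^*$ is a strict (isolated) local minimizer: there exists $\delta>0$ such that $\beta^*$ is the unique minimizer of $f$ over $\{\beta\in\Sigma:\|\beta-\beta^*\|<\delta\}$.
   Context: Data: $X\in\mathbb{R}^{n\times p_1}$, $Z\in\mathbb{R}^{n\times p_2}$ with rows $x_i,z_i$; $y\in\mathbb{R}^n$ ($y\in\{0,1\}^n$ for $\ell_{log}$); $a,b,c>0$; integers $1\le s_j\le p_j$. Losses $\ell_{lin}(\beta;X,y)=\frac12\sum_i(y_i-\langle x_i,\beta\rangle)^2$, $\ell_{log}(\beta;X,y)=\sum_i(\log(1+\exp\langle x_i,\beta\rangle)-y_i\langle x_i,\beta\rangle)$. Objective $f(\beta)=\frac1n[a\ell(\beta_1;X,y)+b\ell(\beta_2;Z,y)+\frac c2\|X\beta_1-Z\beta_2\|^2]$, $\beta=(\beta_1;\beta_2)$. (SCL): minimize $f$ subject to $\|\beta_1\|_0\le s_1,\|\beta_2\|_0\le s_2$; feasible set $\Sigma$. A local minimizer is a feasible point minimizing $f$ over feasible points in some neighborhood. A matrix is $s$-regular if any $s$ of its columns are linearly independent. *)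

theory Defs
  imports "HOL-Analysis.Analysis"
begin

datatype loss = Lin | Log

definition loss_fun :: "loss \<Rightarrow> real^'p \<Rightarrow> real^'p^'n \<Rightarrow> real^'n \<Rightarrow> real" where
  "loss_fun l \<beta> X y = (case l of
     Lin \<Rightarrow> (1/2) * (\<Sum>i\<in>UNIV. (y$i - (X *v \<beta>)$i)^2)
   | Log \<Rightarrow> (\<Sum>i\<in>UNIV. ln (1 + exp ((X *v \<beta>)$i)) - y$i * (X *v \<beta>)$i))"

definition scl_obj :: "loss \<Rightarrow> real \<Rightarrow> real \<Rightarrow> real \<Rightarrow> real^'p1^'n \<Rightarrow> real^'p2^'n \<Rightarrow> real^'n
    \<Rightarrow> ((real^'p1) \<times> (real^'p2)) \<Rightarrow> real" where
  "scl_obj l a b c X Z y \<beta> = (1 / real CARD('n)) *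
     (a * loss_fun l (fst \<beta>) X y + b * loss_fun l (snd \<beta>) Z y
      + (c/2) * (norm (X *v fst \<beta> - Z *v snd \<beta>))^2)"

definition l0norm :: "real^'p \<Rightarrow> nat" where
  "l0norm v = card {i. v$i \<noteq> 0}"

definition scl_feasible :: "nat \<Rightarrow> nat \<Rightarrow> ((real^'p1) \<times> (real^'p2)) set" where
  "scl_feasible s1 s2 = {\<beta>. l0norm (fst \<beta>) \<le> s1 \<and> l0norm (snd \<beta>) \<le> s2}"

definition concat_col :: "real^'p1^'n \<Rightarrow> real^'p2^'n \<Rightarrow> ('p1 + 'p2) \<Rightarrow> real^'n" where
  "concat_col X Z j = (case j of Inl i \<Rightarrow> column i X | Inr k \<Rightarrow> column k Z)"

definition s_regular :: "nat \<Rightarrow> (('p1 + 'p2) \<Rightarrow> real^'n) \<Rightarrow> bool" where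
  "s_regular s col = (\<forall>S. card S = s \<longrightarrow>
     (\<forall>w. (\<Sum>j\<in>S. w j *\<^sub>R col j) = 0 \<longrightarrow> (\<forall>j\<in>S. w j = 0)))"

definition local_min_on :: "('a::metric_space \<Rightarrow> real) \<Rightarrow> 'a set \<Rightarrow> 'a \<Rightarrow> bool" where
  "local_min_on f A x = (x \<in> A \<and> (\<exists>e>0. \<forall>y\<in>A. dist y x < e \<longrightarrow> f x \<le> f y))"

end

theory Submission
  imports Defs
begin

(* The feasible set is the finite union of the coordinate subspaces
   V(S1,S2) = {beta. supp beta1 <= S1, supp beta2 <= S2} with |S1| = s1, |S2| = s2.
   By s-regularity the map beta |-> X beta1 - Z beta2 is injective on each V(S1,S2),
   so there the coupling term, and with it f, is strictly convex and grows
   quadratically.  Hence f attains its minimum on every piece, and a local minimizer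
   of f on a piece is its unique global minimizer there.  A local minimizer of f on
   the union is a local minimizer on each piece containing it, which gives
   finiteness; and since every feasible point close to beta* has a support
   containing that of beta*, it lies in a common piece with beta*, on which beta*
   is the strict minimizer. *)

definition strict_convex_on :: "'a::real_vector set \<Rightarrow> ('a \<Rightarrow> real) \<Rightarrow> bool" where
  "strict_convex_on S f \<longleftrightarrow> convex S \<and> (\<forall>x\<in>S. \<forall>y\<in>S. x \<noteq> y \<longrightarrow>
     (\<forall>t. 0 < t \<and> t < 1 \<longrightarrow> f ((1 - t) *\<^sub>R x + t *\<^sub>R y) < (1 - t) * f x + t * f y))"

lemma strict_convex_onD:
  assumes "strict_convex_on S f" "x \<in> S" "y \<in> S" "x \<noteq> y" "0 < t" "t < 1"
  shows "f ((1 - t) *\<^sub>R x + t *\<^sub>R y) < (1 - t) * f x + t * f y"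
  using assms unfolding strict_convex_on_def by blast

lemma strict_convex_on_add:
  assumes "convex_on S f" and "strict_convex_on S g"
  shows "strict_convex_on S (\<lambda>x. f x + g x)"
  unfolding strict_convex_on_def
proof (intro conjI ballI impI allI)
  show "convex S"
    using assms(2) by (simp add: strict_convex_on_def)
  fix x y and t :: real assume "x \<in> S" "y \<in> S" "x \<noteq> y" "0 < t \<and> t < 1"
  then have "f ((1 - t) *\<^sub>R x + t *\<^sub>R y) \<le> (1 - t) * f x + t * f y"
    and "g ((1 - t) *\<^sub>R x + t *\<^sub>R y) < (1 - t) * g x + t * g y"
    using convex_onD[OF assms(1)] strict_convex_onD[OF assms(2)] by auto
  then show "f ((1 - t) *\<^sub>R x + t *\<^sub>R y) + g ((1 - t) *\<^sub>R x + t *\<^sub>R y)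
      < (1 - t) * (f x + g x) + t * (f y + g y)"
    by (simp add: algebra_simps)
qed

lemma strict_convex_on_cmul:
  assumes "0 < c" and "strict_convex_on S f"
  shows "strict_convex_on S (\<lambda>x. c * f x)"
  using assms mult_strict_left_mono[OF strict_convex_onD[OF assms(2)] assms(1)]
  by (auto simp: strict_convex_on_def algebra_simps)

lemma strict_convex_on_norm_square_linear:
  fixes L :: "'a::real_vector \<Rightarrow> 'b::real_inner"
  assumes "linear L" and "convex S" and "inj_on L S"
  shows "strict_convex_on S (\<lambda>x. (norm (L x))\<^sup>2)"
  unfolding strict_convex_on_def
proof (intro conjI ballI impI allI)
  fix x y and t :: real assume xy: "x \<in> S" "y \<in> S" "x \<noteq> y" and t: "0 < t \<and> t < 1"
  have "L x \<noteq> L y"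
    using xy assms(3) by (auto dest: inj_onD)
  then have pos: "0 < t * (1 - t) * (norm (L x - L y))\<^sup>2"
    using t by simp
  have "L ((1 - t) *\<^sub>R x + t *\<^sub>R y) = (1 - t) *\<^sub>R L x + t *\<^sub>R L y"
    by (simp add: linear_add[OF assms(1)] linear_scale[OF assms(1)])
  moreover have "(norm ((1 - t) *\<^sub>R u + t *\<^sub>R v))\<^sup>2
      = (1 - t) * (norm u)\<^sup>2 + t * (norm v)\<^sup>2 - t * (1 - t) * (norm (u - v))\<^sup>2" for u v :: 'b
    by (simp add: power2_norm_eq_inner inner_simps algebra_simps inner_commute)
  ultimately have "(norm (L ((1 - t) *\<^sub>R x + t *\<^sub>R y)))\<^sup>2
      = (1 - t) * (norm (L x))\<^sup>2 + t * (norm (L y))\<^sup>2 - t * (1 - t) * (norm (L x - L y))\<^sup>2"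
    by simp
  with pos show "(norm (L ((1 - t) *\<^sub>R x + t *\<^sub>R y)))\<^sup>2 < (1 - t) * (norm (L x))\<^sup>2 + t * (norm (L y))\<^sup>2"
    by linarith
qed (rule assms(2))

lemma local_min_on_subset:
  assumes "local_min_on f T x" and "S \<subseteq> T" and "x \<in> S"
  shows "local_min_on f S x"
  using assms unfolding local_min_on_def by blast

lemma strict_convex_on_local_min_less:
  fixes f :: "'a::real_normed_vector \<Rightarrow> real"
  assumes conv: "strict_convex_on S f" and min: "local_min_on f S x" and y: "y \<in> S" "y \<noteq> x"
  shows "f x < f y"
proof -
  obtain e where e: "e > 0" "\<And>z. z \<in> S \<Longrightarrow> dist z x < e \<Longrightarrow> f x \<le> f z"
    using min unfolding local_min_on_def by blast
  have x: "x \<in> S"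
    using min by (simp add: local_min_on_def)
  define d where "d = norm (y - x)"
  have d: "d > 0"
    using y by (simp add: d_def)
  define t where "t = min (1/2) (e / (2 * d))"
  have t: "0 < t" "t < 1" "t * d < e"
    using d e by (auto simp: t_def min_def field_simps)
  define z where "z = (1 - t) *\<^sub>R x + t *\<^sub>R y"
  have "z \<in> S"
    using conv x y t unfolding strict_convex_on_def z_def by (auto intro: convexD_alt)
  moreover have "dist z x = t * d"
    using t by (simp add: z_def d_def dist_norm algebra_simps flip: scaleR_diff_right)
  ultimately have "f x \<le> f z"
    using e t by simp
  also have "\<dots> < (1 - t) * f x + t * f y"
    unfolding z_def using strict_convex_onD[OF conv x y(1)] y(2) t by auto
  finally show ?thesis
    using t by (simp add: algebra_simps)
qed

lemma strict_convex_on_local_min_unique: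
  fixes f :: "'a::real_normed_vector \<Rightarrow> real"
  assumes "strict_convex_on S f" and "local_min_on f S x" and "local_min_on f S x'"
  shows "x = x'"
proof (rule ccontr)
  assume "x \<noteq> x'"
  moreover have "x \<in> S" "x' \<in> S"
    using assms(2,3) by (simp_all add: local_min_on_def)
  ultimately have "f x < f x'" and "f x' < f x"
    using strict_convex_on_local_min_less[OF assms(1)] assms(2,3) by auto
  then show False
    by simp
qed

lemma ex_min_on_finite_Union:
  fixes f :: "'a \<Rightarrow> real"
  assumes "finite \<V>" and "\<V> \<noteq> {}" and "\<And>V. V \<in> \<V> \<Longrightarrow> \<exists>m\<in>V. \<forall>z\<in>V. f m \<le> f z"
  shows "\<exists>m\<in>\<Union>\<V>. \<forall>z\<in>\<Union>\<V>. f m \<le> f z"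
  using assms
proof (induction \<V> rule: finite_ne_induct)
  case (insert V \<V>)
  obtain m where m: "m \<in> V" "\<forall>z\<in>V. f m \<le> f z"
    using insert.prems by blast
  obtain m' where m': "m' \<in> \<Union>\<V>" "\<forall>z\<in>\<Union>\<V>. f m' \<le> f z"
    using insert.IH insert.prems by blast
  show ?case
  proof (cases "f m \<le> f m'")
    case True
    then show ?thesis
      using m m' by (intro bexI[of _ m]) (auto intro: order_trans)
  next
    case False
    then show ?thesis
      using m m' by (intro bexI[of _ m']) (auto intro: order_trans)
  qed
qed simp

lemma finite_local_min_on_Union:
  fixes f :: "'a::real_normed_vector \<Rightarrow> real"
  assumes "finite \<V>" and "\<And>V. V \<in> \<V> \<Longrightarrow> strict_convex_on V f"
  shows "finite {x. local_min_on f (\<Union>\<V>) x}"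
proof (rule finite_subset)
  show "{x. local_min_on f (\<Union>\<V>) x} \<subseteq> (\<Union>V\<in>\<V>. {x. local_min_on f V x})"
  proof
    fix x assume "x \<in> {x. local_min_on f (\<Union>\<V>) x}"
    then obtain V where "V \<in> \<V>" "x \<in> V" "local_min_on f (\<Union>\<V>) x"
      by (auto simp: local_min_on_def)
    then show "x \<in> (\<Union>V\<in>\<V>. {x. local_min_on f V x})"
      using local_min_on_subset[of f "\<Union>\<V>" x V] by blast
  qed
  have "finite {x. local_min_on f V x}" if "V \<in> \<V>" for V
  proof (cases "\<exists>x. local_min_on f V x")
    case True
    then obtain x where "local_min_on f V x" ..
    then have "{x. local_min_on f V x} \<subseteq> {x}"
      using strict_convex_on_local_min_unique[OF assms(2)[OF that]] by blast
    then show ?thesis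
      using finite_subset by blast
  qed simp
  then show "finite (\<Union>V\<in>\<V>. {x. local_min_on f V x})"
    using assms(1) by blast
qed

lemma local_min_on_Union_isolated:
  fixes f :: "'a::real_normed_vector \<Rightarrow> real"
  assumes "\<And>V. V \<in> \<V> \<Longrightarrow> strict_convex_on V f" and "local_min_on f (\<Union>\<V>) x"
    and "\<forall>\<^sub>F z in nhds x. z \<in> \<Union>\<V> \<longrightarrow> (\<exists>V\<in>\<V>. x \<in> V \<and> z \<in> V)"
  shows "\<exists>\<delta>>0. \<forall>z\<in>\<Union>\<V>. dist z x < \<delta> \<and> z \<noteq> x \<longrightarrow> f x < f z"
proof -
  obtain \<delta> where "\<delta> > 0"
    and \<delta>: "\<And>z. dist z x < \<delta> \<Longrightarrow> z \<in> \<Union>\<V> \<Longrightarrow> \<exists>V\<in>\<V>. x \<in> V \<and> z \<in> V"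
    using assms(3) unfolding eventually_nhds_metric by blast
  have "f x < f z" if z: "z \<in> \<Union>\<V>" "dist z x < \<delta>" "z \<noteq> x" for z
  proof -
    obtain V where "V \<in> \<V>" "x \<in> V" "z \<in> V"
      using \<delta> z by blast
    then show ?thesis
      using strict_convex_on_local_min_less[OF assms(1) local_min_on_subset[OF assms(2)]] z
      by blast
  qed
  with \<open>\<delta> > 0\<close> show ?thesis
    by blast
qed

lemma convex_on_compose_linear:
  assumes "convex_on UNIV f" and "linear g"
  shows "convex_on UNIV (\<lambda>x. f (g x))"
proof (rule convex_onI)
  fix t :: real and x y assume "0 < t" "t < 1"
  then show "f (g ((1 - t) *\<^sub>R x + t *\<^sub>R y)) \<le> (1 - t) * f (g x) + t * f (g y)"
    using convex_onD[OF assms(1)] by (simp add: linear_add[OF assms(2)] linear_scale[OF assms(2)])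
qed simp

lemma convex_on_sum_fun:
  assumes "convex S" and "\<And>i. i \<in> I \<Longrightarrow> convex_on S (f i)"
  shows "convex_on S (\<lambda>x. \<Sum>i\<in>I. f i x)"
  using assms(2)
  by (induction I rule: infinite_finite_induct) (auto simp: convex_on_const assms(1))

lemma continuous_attains_inf_sublevel:
  fixes f :: "'a::heine_borel \<Rightarrow> real"
  assumes "closed S" and "continuous_on S f" and "x\<^sub>0 \<in> S" and "bounded {x\<in>S. f x \<le> f x\<^sub>0}"
  shows "\<exists>m\<in>S. \<forall>x\<in>S. f m \<le> f x"
proof -
  define K where "K = {x\<in>S. f x \<le> f x\<^sub>0}"
  have "closed K"
    using continuous_closed_preimage[OF assms(2,1), of "{..f x\<^sub>0}"]
    by (simp add: K_def vimage_def Int_def)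
  then have "compact K"
    using assms(4) by (simp add: K_def compact_eq_bounded_closed)
  moreover have "x\<^sub>0 \<in> K" "K \<subseteq> S"
    using assms(3) by (auto simp: K_def)
  ultimately obtain m where "m \<in> K" "\<forall>x\<in>K. f m \<le> f x"
    using continuous_attains_inf[of K f] continuous_on_subset[OF assms(2)] by blast
  moreover have "f m \<le> f x" if "x \<in> S" for x
    using that calculation \<open>x\<^sub>0 \<in> K\<close> by (cases "x \<in> K") (auto simp: K_def)
  ultimately show ?thesis
    using \<open>K \<subseteq> S\<close> by blast
qed

definition vec_support :: "'a::zero^'n \<Rightarrow> 'n set" where
  "vec_support v = {i. v $ i \<noteq> 0}"

lemma eventually_vec_support_subset:
  fixes v :: "'a::real_normed_vector^'n"
  shows "\<forall>\<^sub>F w in nhds v. vec_support v \<subseteq> vec_support w"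
proof -
  have "\<forall>\<^sub>F w in nhds v. w $ i \<noteq> 0" if "i \<in> vec_support v" for i
    using that tendsto_imp_eventually_ne[OF tendsto_vec_nth[OF filterlim_ident]]
    by (simp add: vec_support_def)
  then have "\<forall>\<^sub>F w in nhds v. \<forall>i\<in>vec_support v. w $ i \<noteq> 0"
    by (intro eventually_ball_finite) auto
  then show ?thesis
    by (rule eventually_mono) (auto simp: vec_support_def)
qed

definition pointwise_loss :: "loss \<Rightarrow> real \<Rightarrow> real \<Rightarrow> real" where
  "pointwise_loss l w z = (case l of Lin \<Rightarrow> (1/2) * (w - z)\<^sup>2 | Log \<Rightarrow> ln (1 + exp z) - w * z)"

lemma loss_fun_eq_sum: "loss_fun l \<beta> X y = (\<Sum>i\<in>UNIV. pointwise_loss l (y $ i) ((X *v \<beta>) $ i))"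
  by (cases l) (simp_all add: loss_fun_def pointwise_loss_def sum_distrib_left)

lemma one_add_exp_pos: "0 < 1 + exp (x::real)"
  by (simp add: add_pos_pos)

lemma logistic_mono:
  fixes x y :: real
  assumes "x \<le> y"
  shows "exp x / (1 + exp x) \<le> exp y / (1 + exp y)"
proof -
  have logistic_eq: "exp z / (1 + exp z) = 1 - 1 / (1 + exp z)" for z :: real
    using one_add_exp_pos[of z] by (simp add: field_simps)
  have "1 / (1 + exp y) \<le> 1 / (1 + exp x)"
    using assms one_add_exp_pos[of x] one_add_exp_pos[of y] by (simp add: divide_simps)
  then show ?thesis
    unfolding logistic_eq by linarith
qed

lemma convex_on_pointwise_loss: "convex_on UNIV (pointwise_loss l w)"
proof (cases l)
  case Lin
  show ?thesis
    unfolding pointwise_loss_def[abs_def] Lin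
    by (rule convex_on_realI[where f' = "\<lambda>z. z - w"])
      (auto intro!: derivative_eq_intros)
next
  case Log
  show ?thesis
    unfolding pointwise_loss_def[abs_def] Log
    by (rule convex_on_realI[where f' = "\<lambda>z. exp z / (1 + exp z) - w"])
      (auto simp: one_add_exp_pos logistic_mono intro!: derivative_eq_intros)
qed

lemma pointwise_loss_nonneg:
  assumes "l = Log \<Longrightarrow> 0 \<le> w \<and> w \<le> 1"
  shows "0 \<le> pointwise_loss l w z"
proof (cases l)
  case Log
  have "0 \<le> ln (1 + exp z)" and "z \<le> ln (1 + exp z)"
    using ln_le_cancel_iff[of "exp z" "1 + exp z"] by (auto simp: one_add_exp_pos)
  moreover have "w * z \<le> z" if "0 \<le> z"
    using assms Log that by (simp add: mult_left_le_one_le)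
  moreover have "w * z \<le> 0" if "z < 0"
    using assms Log that by (simp add: mult_nonneg_nonpos)
  ultimately have "w * z \<le> ln (1 + exp z)"
    by (cases "0 \<le> z") linarith+
  then show ?thesis
    by (simp add: pointwise_loss_def Log)
qed (simp add: pointwise_loss_def)

lemma loss_fun_nonneg:
  assumes "l = Log \<Longrightarrow> \<forall>i. 0 \<le> y $ i \<and> y $ i \<le> 1"
  shows "0 \<le> loss_fun l \<beta> X y"
  unfolding loss_fun_eq_sum using assms by (intro sum_nonneg pointwise_loss_nonneg) auto

lemma convex_on_loss_fun: "convex_on UNIV (\<lambda>\<beta>. loss_fun l \<beta> X y)"
proof -
  have "linear (\<lambda>\<beta>. (X *v \<beta>) $ i)" for i
    using linear_compose[OF matrix_vector_mul_linear bounded_linear.linear[OF bounded_linear_vec_nth]]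
    by (simp add: o_def)
  then show ?thesis
    unfolding loss_fun_eq_sum
    by (intro convex_on_sum_fun convex_on_compose_linear[OF convex_on_pointwise_loss]) auto
qed

lemma continuous_on_loss_fun [continuous_intros]:
  "continuous_on S f \<Longrightarrow> continuous_on S (\<lambda>x. loss_fun l (f x) X y)"
  unfolding loss_fun_eq_sum pointwise_loss_def
  by (cases l) (auto intro!: continuous_intros bounded_linear.continuous_on[OF matrix_vector_mul_bounded_linear]
      simp: one_add_exp_pos less_imp_neq[symmetric])

definition coupling :: "real^'p1^'n \<Rightarrow> real^'p2^'n \<Rightarrow> (real^'p1) \<times> (real^'p2) \<Rightarrow> real^'n" where
  "coupling X Z \<beta> = X *v fst \<beta> - Z *v snd \<beta>"

lemma linear_coupling: "linear (coupling X Z)"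
  by (rule linearI) (simp_all add: coupling_def matrix_vector_right_distrib
      matrix_vector_mult_scaleR algebra_simps)

definition coord_subspace :: "'p1 set \<Rightarrow> 'p2 set \<Rightarrow> ((real^'p1) \<times> (real^'p2)) set" where
  "coord_subspace S1 S2 = {\<beta>. vec_support (fst \<beta>) \<subseteq> S1 \<and> vec_support (snd \<beta>) \<subseteq> S2}"

lemma subspace_coord_subspace: "subspace (coord_subspace S1 S2)"
  unfolding subspace_def coord_subspace_def vec_support_def subset_iff
  by (auto; metis add.right_neutral mult_zero_right)

lemma matrix_vector_mult_eq_sum_columns:
  fixes X :: "real^'p^'n"
  assumes "vec_support v \<subseteq> S"
  shows "X *v v = (\<Sum>i\<in>S. v $ i *\<^sub>R column i X)"
proof -
  have "X *v v = (\<Sum>i\<in>UNIV. v $ i *\<^sub>R column i X)"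
    by (simp add: matrix_mult_sum scalar_mult_eq_scaleR)
  also have "\<dots> = (\<Sum>i\<in>S. v $ i *\<^sub>R column i X)"
    using assms by (intro sum.mono_neutral_right) (auto simp: vec_support_def)
  finally show ?thesis .
qed

lemma s_regular_coupling_eq_0:
  fixes X :: "real^'p1^'n" and Z :: "real^'p2^'n"
  assumes reg: "s_regular (card S1 + card S2) (concat_col X Z)"
    and \<beta>: "\<beta> \<in> coord_subspace S1 S2" and "coupling X Z \<beta> = 0"
  shows "\<beta> = 0"
proof -
  define S where "S = Inl ` S1 \<union> Inr ` S2"
  define w where "w j = (case j of Inl i \<Rightarrow> fst \<beta> $ i | Inr k \<Rightarrow> - snd \<beta> $ k)" for j
  have "card S = card S1 + card S2"
    unfolding S_def by (subst card_Un_disjoint) (auto simp: card_image)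
  have "(\<Sum>j\<in>S. w j *\<^sub>R concat_col X Z j)
      = (\<Sum>i\<in>S1. fst \<beta> $ i *\<^sub>R column i X) - (\<Sum>k\<in>S2. snd \<beta> $ k *\<^sub>R column k Z)"
    unfolding S_def
    by (subst sum.union_disjoint) (auto simp: sum.reindex w_def concat_col_def sum_negf)
  also have "\<dots> = coupling X Z \<beta>"
    using \<beta> matrix_vector_mult_eq_sum_columns[of "fst \<beta>" S1 X]
      matrix_vector_mult_eq_sum_columns[of "snd \<beta>" S2 Z]
    by (simp add: coupling_def coord_subspace_def)
  finally have w0: "\<forall>j\<in>S. w j = 0"
    using reg \<open>card S = card S1 + card S2\<close> assms(3) unfolding s_regular_def by auto
  have "fst \<beta> $ i = 0" for i
    using w0[rule_format, of "Inl i"] \<beta>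
    by (cases "i \<in> S1") (auto simp: S_def w_def coord_subspace_def vec_support_def)
  moreover have "snd \<beta> $ k = 0" for k
    using w0[rule_format, of "Inr k"] \<beta>
    by (cases "k \<in> S2") (auto simp: S_def w_def coord_subspace_def vec_support_def)
  ultimately show ?thesis
    by (simp add: prod_eq_iff vec_eq_iff)
qed

lemma strict_convex_on_scl_obj:
  fixes X :: "real^'p1^'n" and Z :: "real^'p2^'n"
  assumes reg: "s_regular (card S1 + card S2) (concat_col X Z)"
    and "0 \<le> a" and "0 \<le> b" and "0 < c"
  shows "strict_convex_on (coord_subspace S1 S2) (scl_obj l a b c X Z y)"
proof -
  let ?V = "coord_subspace S1 S2"
  have "convex ?V"
    by (rule subspace_imp_convex[OF subspace_coord_subspace])
  have "convex_on ?V (\<lambda>\<beta>. loss_fun l (fst \<beta>) X y)"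
    using convex_on_compose_linear[OF convex_on_loss_fun linear_fst]
    by (rule convex_on_subset) (simp_all add: \<open>convex ?V\<close>)
  moreover have "convex_on ?V (\<lambda>\<beta>. loss_fun l (snd \<beta>) Z y)"
    using convex_on_compose_linear[OF convex_on_loss_fun linear_snd]
    by (rule convex_on_subset) (simp_all add: \<open>convex ?V\<close>)
  ultimately have losses:
    "convex_on ?V (\<lambda>\<beta>. a * loss_fun l (fst \<beta>) X y + b * loss_fun l (snd \<beta>) Z y)"
    using assms(2,3) by (intro convex_on_add convex_on_cmul)
  have "inj_on (coupling X Z) ?V"
    using s_regular_coupling_eq_0[OF reg]
    by (simp add: linear_inj_on_iff_eq_0[OF linear_coupling subspace_coord_subspace])
  then have penalty: "strict_convex_on ?V (\<lambda>\<beta>. c / 2 * (norm (coupling X Z \<beta>))\<^sup>2)"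
    using assms(4) \<open>convex ?V\<close>
    by (intro strict_convex_on_cmul strict_convex_on_norm_square_linear linear_coupling) auto
  have "strict_convex_on ?V (\<lambda>\<beta>. 1 / real CARD('n) * (a * loss_fun l (fst \<beta>) X y
      + b * loss_fun l (snd \<beta>) Z y + c / 2 * (norm (coupling X Z \<beta>))\<^sup>2))"
    by (rule strict_convex_on_cmul[OF _ strict_convex_on_add[OF losses penalty]]) simp
  then show ?thesis
    by (simp add: scl_obj_def[abs_def] coupling_def)
qed

lemma scl_obj_attains_min_on_coord_subspace:
  fixes X :: "real^'p1^'n" and Z :: "real^'p2^'n"
  assumes reg: "s_regular (card S1 + card S2) (concat_col X Z)"
    and "0 \<le> a" and "0 \<le> b" and "0 < c" and "l = Log \<Longrightarrow> \<forall>i. 0 \<le> y $ i \<and> y $ i \<le> 1"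
  shows "\<exists>m\<in>coord_subspace S1 S2. \<forall>\<beta>\<in>coord_subspace S1 S2.
           scl_obj l a b c X Z y m \<le> scl_obj l a b c X Z y \<beta>"
proof -
  let ?V = "coord_subspace S1 S2" and ?F = "scl_obj l a b c X Z y"
  obtain e where "e > 0" and e: "\<And>\<beta>. \<beta> \<in> ?V \<Longrightarrow> e * norm \<beta> \<le> norm (coupling X Z \<beta>)"
    using injective_imp_isometric[OF closed_subspace[OF subspace_coord_subspace] subspace_coord_subspace
        linear_coupling[unfolded linear_conv_bounded_linear]] s_regular_coupling_eq_0[OF reg]
    by blast
  define q where "q = c * e\<^sup>2 / (2 * real CARD('n))"
  have "q > 0"
    using \<open>e > 0\<close> assms(4) by (simp add: q_def)
  have growth: "q * (norm \<beta>)\<^sup>2 \<le> ?F \<beta>" if "\<beta> \<in> ?V" for \<beta>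
  proof -
    have "0 \<le> a * loss_fun l (fst \<beta>) X y + b * loss_fun l (snd \<beta>) Z y"
      using assms(2,3,5) by (simp add: loss_fun_nonneg)
    moreover have "(e * norm \<beta>)\<^sup>2 \<le> (norm (coupling X Z \<beta>))\<^sup>2"
      using e[OF that] \<open>e > 0\<close> by (simp add: power_mono)
    then have "c / 2 * (e * norm \<beta>)\<^sup>2 \<le> c / 2 * (norm (coupling X Z \<beta>))\<^sup>2"
      using assms(4) by (intro mult_left_mono) auto
    ultimately have "1 / real CARD('n) * (c / 2 * (e * norm \<beta>)\<^sup>2) \<le> ?F \<beta>"
      unfolding scl_obj_def coupling_def[symmetric] by (intro mult_left_mono) auto
    then show ?thesis
      by (simp add: q_def power_mult_distrib)
  qed
  have "{\<beta>\<in>?V. ?F \<beta> \<le> ?F 0} \<subseteq> cball 0 (sqrt (?F 0 / q))"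
  proof
    fix \<beta> assume "\<beta> \<in> {\<beta>\<in>?V. ?F \<beta> \<le> ?F 0}"
    then have "(norm \<beta>)\<^sup>2 \<le> ?F 0 / q"
      using growth[of \<beta>] \<open>q > 0\<close> by (simp add: pos_le_divide_eq mult.commute)
    then show "\<beta> \<in> cball 0 (sqrt (?F 0 / q))"
      by (simp add: real_le_rsqrt)
  qed
  then have "bounded {\<beta>\<in>?V. ?F \<beta> \<le> ?F 0}"
    by (rule bounded_subset[OF bounded_cball])
  moreover have "continuous_on ?V ?F"
    unfolding scl_obj_def
    by (intro continuous_intros bounded_linear.continuous_on[OF matrix_vector_mul_bounded_linear])
  moreover have "0 \<in> ?V"
    by (simp add: coord_subspace_def vec_support_def)
  ultimately show ?thesis
    by (intro continuous_attains_inf_sublevel closed_subspace subspace_coord_subspace)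
qed

definition support_subspaces :: "nat \<Rightarrow> nat \<Rightarrow> ((real^'p1) \<times> (real^'p2)) set set" where
  "support_subspaces s1 s2 = {coord_subspace S1 S2 | S1 S2. card S1 = s1 \<and> card S2 = s2}"

lemma finite_support_subspaces: "finite (support_subspaces s1 s2)"
proof (rule finite_subset)
  show "support_subspaces s1 s2 \<subseteq> (\<lambda>(S1, S2). coord_subspace S1 S2) ` UNIV"
    by (auto simp: support_subspaces_def)
qed simp

lemma scl_feasible_eq_Union_support_subspaces:
  assumes "s1 \<le> CARD('p1)" and "s2 \<le> CARD('p2)"
  shows "scl_feasible s1 s2 = \<Union>(support_subspaces s1 s2 :: ((real^'p1) \<times> (real^'p2)) set set)"
proof
  show "scl_feasible s1 s2 \<subseteq> \<Union>(support_subspaces s1 s2 :: ((real^'p1) \<times> (real^'p2)) set set)"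
  proof
    fix \<beta> :: "(real^'p1) \<times> (real^'p2)" assume "\<beta> \<in> scl_feasible s1 s2"
    then have card: "card (vec_support (fst \<beta>)) \<le> s1" "card (vec_support (snd \<beta>)) \<le> s2"
      by (simp_all add: scl_feasible_def l0norm_def vec_support_def)
    obtain S1 where S1: "vec_support (fst \<beta>) \<subseteq> S1" "card S1 = s1"
      using exists_subset_between[of "vec_support (fst \<beta>)" s1 UNIV] assms(1) card(1) by auto
    obtain S2 where S2: "vec_support (snd \<beta>) \<subseteq> S2" "card S2 = s2"
      using exists_subset_between[of "vec_support (snd \<beta>)" s2 UNIV] assms(2) card(2) by auto
    show "\<beta> \<in> \<Union>(support_subspaces s1 s2)"
      using S1 S2 by (auto simp: support_subspaces_def coord_subspace_def)
  qed
  show "\<Union>(support_subspaces s1 s2) \<subseteq> scl_feasible s1 s2"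
    by (auto simp: support_subspaces_def coord_subspace_def scl_feasible_def l0norm_def
        vec_support_def intro: card_mono[THEN order_trans])
qed

lemma scl_obj_on_support_subspace:
  fixes X :: "real^'p1^'n" and Z :: "real^'p2^'n"
  assumes "V \<in> support_subspaces s1 s2" and "s_regular (s1 + s2) (concat_col X Z)"
    and "0 \<le> a" and "0 \<le> b" and "0 < c" and "l = Log \<Longrightarrow> \<forall>i. 0 \<le> y $ i \<and> y $ i \<le> 1"
  shows "strict_convex_on V (scl_obj l a b c X Z y)"
    and "\<exists>m\<in>V. \<forall>\<beta>\<in>V. scl_obj l a b c X Z y m \<le> scl_obj l a b c X Z y \<beta>"
proof -
  obtain S1 S2 where V: "V = coord_subspace S1 S2" and "card S1 = s1" "card S2 = s2"
    using assms(1) by (auto simp: support_subspaces_def)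
  then have reg: "s_regular (card S1 + card S2) (concat_col X Z)"
    using assms(2) by simp
  show "strict_convex_on V (scl_obj l a b c X Z y)"
    unfolding V using strict_convex_on_scl_obj[OF reg assms(3-5)] .
  show "\<exists>m\<in>V. \<forall>\<beta>\<in>V. scl_obj l a b c X Z y m \<le> scl_obj l a b c X Z y \<beta>"
    unfolding V using scl_obj_attains_min_on_coord_subspace[OF reg assms(3-6)] .
qed

lemma eventually_coord_subspace_mono:
  "\<forall>\<^sub>F \<gamma> in nhds \<beta>. \<forall>S1 S2. \<gamma> \<in> coord_subspace S1 S2 \<longrightarrow> \<beta> \<in> coord_subspace S1 S2"
proof -
  have "\<forall>\<^sub>F \<gamma> in nhds \<beta>. vec_support (fst \<beta>) \<subseteq> vec_support (fst \<gamma>)"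
    using eventually_compose_filterlim[OF eventually_vec_support_subset tendsto_fst[OF filterlim_ident]] .
  moreover have "\<forall>\<^sub>F \<gamma> in nhds \<beta>. vec_support (snd \<beta>) \<subseteq> vec_support (snd \<gamma>)"
    using eventually_compose_filterlim[OF eventually_vec_support_subset tendsto_snd[OF filterlim_ident]] .
  ultimately show ?thesis
    by eventually_elim (auto simp: coord_subspace_def)
qed

theorem theorem3p5:
  fixes X :: "real^'p1^'n" and Z :: "real^'p2^'n" and y :: "real^'n"
    and a b c :: real and s1 s2 :: nat and l :: loss
  assumes "a > 0" and "b > 0" and "c > 0"
    and "1 \<le> s1" and "s1 \<le> CARD('p1)" and "1 \<le> s2" and "s2 \<le> CARD('p2)"
    and "l = Log \<Longrightarrow> (\<forall>i. y$i = 0 \<or> y$i = 1)"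
    and "s_regular (s1 + s2) (concat_col X Z)"
  shows "(\<exists>\<beta>\<in>scl_feasible s1 s2. \<forall>\<gamma>\<in>scl_feasible s1 s2.
            scl_obj l a b c X Z y \<beta> \<le> scl_obj l a b c X Z y \<gamma>)
       \<and> finite {\<beta>. local_min_on (scl_obj l a b c X Z y) (scl_feasible s1 s2) \<beta>}
       \<and> (\<forall>\<beta>s. local_min_on (scl_obj l a b c X Z y) (scl_feasible s1 s2) \<beta>s \<longrightarrow>
            (\<exists>\<delta>>0. \<forall>\<gamma>\<in>scl_feasible s1 s2. norm (\<gamma> - \<beta>s) < \<delta> \<and> \<gamma> \<noteq> \<beta>s \<longrightarrow>
               scl_obj l a b c X Z y \<beta>s < scl_obj l a b c X Z y \<gamma>))"
proof -
  let ?F = "scl_obj l a b c X Z y"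
    and ?\<V> = "support_subspaces s1 s2 :: ((real^'p1) \<times> (real^'p2)) set set"
  have \<Sigma>: "scl_feasible s1 s2 = \<Union>?\<V>"
    using assms(5,7) by (rule scl_feasible_eq_Union_support_subspaces)
  have y: "l = Log \<Longrightarrow> \<forall>i. 0 \<le> y $ i \<and> y $ i \<le> 1"
    using assms(8) by (metis dual_order.refl zero_le_one)
  have strict: "\<And>V. V \<in> ?\<V> \<Longrightarrow> strict_convex_on V ?F"
    and min: "\<And>V. V \<in> ?\<V> \<Longrightarrow> \<exists>m\<in>V. \<forall>\<beta>\<in>V. ?F m \<le> ?F \<beta>"
    using scl_obj_on_support_subspace[OF _ assms(9) _ _ assms(3) y] assms(1,2) by simp_all
  have "0 \<in> scl_feasible s1 s2"
    by (simp add: scl_feasible_def l0norm_def)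
  then have "?\<V> \<noteq> {}"
    using \<Sigma> by auto
  moreover have "\<forall>\<^sub>F \<gamma> in nhds \<beta>. \<gamma> \<in> \<Union>?\<V> \<longrightarrow> (\<exists>V\<in>?\<V>. \<beta> \<in> V \<and> \<gamma> \<in> V)" for \<beta>
    using eventually_coord_subspace_mono[of \<beta>] by eventually_elim (auto simp: support_subspaces_def)
  ultimately show ?thesis
    unfolding \<Sigma> dist_norm[symmetric]
    using ex_min_on_finite_Union[OF finite_support_subspaces _ min]
      finite_local_min_on_Union[OF finite_support_subspaces strict]
      local_min_on_Union_isolated[OF strict] by (auto simp: local_min_on_def)
qed

end
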